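(* Let $f$, $g$, $D$, $Z$, $c$, $[\rho_\ell,\rho_u]$ be as in the context. For every $z$ with $\|z\|\le Z$, every integer $j\ge0$, and all $\rho\le\eta$ in $[\rho_\ell,\rho_u]$, $$\|g^j(z,\rho)-g^j(z,\eta)\|\le(\eta-\rho)\,\frac{D(\rho)^j L Z}{c}.$$
   Context: All norms are Euclidean. $f:\mathbb{R}^n\to\mathbb{R}$ is convex and $L$-smooth (differentiable with $\|\nabla f(z_1)-\nabla f(z_2)\|\le L\|z_1-z_2\|$), with unique minimum value $0$ attained at $f(0)=0$. Fixed constants: $Z>0$, an interval $[\rho_\ell,\rho_u]\subset(0,\infty)$, and $c\in(0,1)$ such that the guaranteed progress condition holds: $\|z-\rho\nabla f(z)\|\le(1-c)\|z\|$ for all $\rho\in[\rho_\ell,\rho_u]$ and all $z$ with $\|z\|\le Z$. $g(z,\rho)=z-\rho\nabla f(z)$, $g^j$ denotes $j$ iterated applications of $g(\cdot,\rho)$, and $D(\rho)=\max\{1,L\rho-1\}$. *)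

theory Defs
  imports "HOL-Analysis.Analysis"
begin

definition gstep :: "('a::real_normed_vector \<Rightarrow> 'a) \<Rightarrow> 'a \<Rightarrow> real \<Rightarrow> 'a" where
  "gstep gradf z \<rho> = z - \<rho> *\<^sub>R gradf z"

definition giter :: "('a::real_normed_vector \<Rightarrow> 'a) \<Rightarrow> nat \<Rightarrow> 'a \<Rightarrow> real \<Rightarrow> 'a" where
  "giter gradf j z \<rho> = ((\<lambda>x. gstep gradf x \<rho>) ^^ j) z"

definition Dfac :: "real \<Rightarrow> real \<Rightarrow> real" where
  "Dfac L \<rho> = max 1 (L * \<rho> - 1)"

end

theory Submission
  imports Defs
begin

text \<open>
The gradient of a convex \<open>L\<close>-smooth function is co-coercive,
\<open>\<parallel>\<nabla>f a - \<nabla>f b\<parallel>\<^sup>2 \<le> L \<langle>\<nabla>f a - \<nabla>f b, a - b\<rangle>\<close>, which makes the gradient step with step size \<open>\<rho>\<close>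
Lipschitz with constant \<open>D(\<rho>) = max 1 (L\<rho> - 1)\<close>. Splitting
\<open>g(x,\<rho>) - g(y,\<eta>) = (g(x,\<rho>) - g(y,\<rho>)) + (\<eta> - \<rho>) \<nabla>f y\<close> and using that the iterates contract
geometrically, \<open>\<parallel>g\<^sup>i(z,\<eta>)\<parallel> \<le> (1-c)\<^sup>i Z\<close>, the error \<open>e\<^sub>i\<close> between the two trajectories obeys
\<open>e\<^sub>i\<^sub>+\<^sub>1 \<le> D(\<rho>) e\<^sub>i + (\<eta> - \<rho>) L (1-c)\<^sup>i Z\<close>; summing the geometric series gives the bound.
\<close>

lemma has_real_derivative_along_line:
  fixes F :: "'a::real_inner \<Rightarrow> real"
  assumes "\<And>x. (F has_derivative (\<lambda>h. G x \<bullet> h)) (at x)"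
  shows "((\<lambda>t. F (p + t *\<^sub>R v)) has_real_derivative (G (p + t *\<^sub>R v) \<bullet> v)) (at t within S)"
proof -
  have "((\<lambda>t. p + t *\<^sub>R v) has_derivative (\<lambda>s. s *\<^sub>R v)) (at t within S)"
    by (auto intro!: derivative_eq_intros)
  from has_derivative_compose[OF this assms]
  show ?thesis unfolding has_field_derivative_def
    by (rule has_derivative_eq_rhs) (auto simp: fun_eq_iff)
qed

lemma smooth_quadratic_upper_bound:
  fixes F :: "'a::real_inner \<Rightarrow> real"
  assumes deriv: "\<And>x. (F has_derivative (\<lambda>h. G x \<bullet> h)) (at x)"
    and lip: "\<And>x y. norm (G x - G y) \<le> L * norm (x - y)"
  shows "F y \<le> F x + G x \<bullet> (y - x) + L / 2 * norm (y - x) ^ 2"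
proof -
  define v where "v = y - x"
  define h where "h t = F (x + t *\<^sub>R v) - t * (G x \<bullet> v) - L / 2 * t\<^sup>2 * norm v ^ 2" for t
  have "h 1 \<le> h 0"
  proof (rule DERIV_nonpos_imp_nonincreasing[of 0 1 h])
    fix t :: real assume t: "0 \<le> t" "t \<le> 1"
    have h': "(h has_real_derivative (G (x + t *\<^sub>R v) \<bullet> v - G x \<bullet> v - L * t * norm v ^ 2)) (at t)"
      unfolding h_def
      by (auto intro!: derivative_eq_intros has_real_derivative_along_line[OF deriv]
               simp: power2_eq_square)
    have "(G (x + t *\<^sub>R v) - G x) \<bullet> v \<le> norm (G (x + t *\<^sub>R v) - G x) * norm v"
      by (rule norm_cauchy_schwarz)
    also have "\<dots> \<le> (L * norm (t *\<^sub>R v)) * norm v"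
      using lip[of "x + t *\<^sub>R v" x] by (intro mult_right_mono) auto
    also have "\<dots> = L * t * norm v ^ 2"
      using t by (simp add: power2_eq_square)
    finally show "\<exists>y. (h has_real_derivative y) (at t) \<and> y \<le> 0"
      using h' by (auto simp: inner_diff_left)
  qed simp
  then show ?thesis
    unfolding h_def v_def by simp
qed

lemma convex_on_above_gradient_tangent:
  fixes F :: "'a::real_inner \<Rightarrow> real"
  assumes convex: "convex_on UNIV F"
    and deriv: "\<And>x. (F has_derivative (\<lambda>h. G x \<bullet> h)) (at x)"
  shows "F x + G x \<bullet> (w - x) \<le> F w"
proof -
  define h where "h t = F (x + t *\<^sub>R (w - x))" for t
  have "convex_on UNIV h"
  proof (rule convex_onI)
    fix u s t :: real assume u: "0 < u" "u < 1"
    have "x + ((1 - u) *\<^sub>R s + u *\<^sub>R t) *\<^sub>R (w - x)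
        = (1 - u) *\<^sub>R (x + s *\<^sub>R (w - x)) + u *\<^sub>R (x + t *\<^sub>R (w - x))"
      by (simp add: algebra_simps)
    then show "h ((1 - u) *\<^sub>R s + u *\<^sub>R t) \<le> (1 - u) * h s + u * h t"
      unfolding h_def
      using convex_onD[OF convex, of u "x + s *\<^sub>R (w - x)" "x + t *\<^sub>R (w - x)"] u by auto
  qed simp
  moreover have "(h has_real_derivative (G (x + 0 *\<^sub>R (w - x)) \<bullet> (w - x))) (at 0 within UNIV)"
    unfolding h_def by (rule has_real_derivative_along_line[OF deriv])
  ultimately have "G x \<bullet> (w - x) \<le> h 1 - h 0"
    using convex_on_imp_above_tangent[of UNIV h 0 1] by simp
  then show ?thesis
    by (simp add: h_def)
qed

text \<open>
Combine the tangent inequality at \<open>x\<close>, evaluated at \<open>w = y - (1/L)(\<nabla>F y - \<nabla>F x)\<close>, with the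
quadratic upper bound for \<open>F - \<langle>\<nabla>F x, _\<rangle>\<close> around \<open>y\<close>.
\<close>
lemma convex_smooth_gradient_gap:
  fixes F :: "'a::real_inner \<Rightarrow> real"
  assumes convex: "convex_on UNIV F"
    and deriv: "\<And>x. (F has_derivative (\<lambda>h. G x \<bullet> h)) (at x)"
    and lip: "\<And>x y. norm (G x - G y) \<le> L * norm (x - y)"
    and L: "L > 0"
  shows "F x + G x \<bullet> (y - x) + norm (G y - G x) ^ 2 / (2 * L) \<le> F y"
proof -
  define e where "e = G y - G x"
  define w where "w = y - (1 / L) *\<^sub>R e"
  have shifted_deriv: "((\<lambda>w. F w - G x \<bullet> w) has_derivative (\<lambda>h. (G w - G x) \<bullet> h)) (at w)" for w
    using deriv[of w] by (auto intro!: derivative_eq_intros simp: inner_diff_left)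
  have shifted_lip: "norm ((G a - G x) - (G b - G x)) \<le> L * norm (a - b)" for a b
    using lip[of a b] by simp
  have tangent: "F x + G x \<bullet> (w - x) \<le> F w"
    by (rule convex_on_above_gradient_tangent[OF convex deriv])
  have upper: "F w - G x \<bullet> w \<le> (F y - G x \<bullet> y) + (G y - G x) \<bullet> (w - y) + L / 2 * norm (w - y) ^ 2"
    by (rule smooth_quadratic_upper_bound[OF shifted_deriv shifted_lip])
  have wy: "w - y = - ((1 / L) *\<^sub>R e)"
    by (simp add: w_def)
  have "(G y - G x) \<bullet> (w - y) = - 2 * (norm e ^ 2 / (2 * L))"
    unfolding wy e_def by (simp add: power2_norm_eq_inner)
  moreover have "L / 2 * norm (w - y) ^ 2 = norm e ^ 2 / (2 * L)"
    unfolding wy using L by (simp add: power2_eq_square field_simps)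
  ultimately show ?thesis
    using tangent upper unfolding e_def by (simp add: inner_diff_right)
qed

lemma convex_smooth_gradient_cocoercive:
  fixes F :: "'a::real_inner \<Rightarrow> real"
  assumes convex: "convex_on UNIV F"
    and deriv: "\<And>x. (F has_derivative (\<lambda>h. G x \<bullet> h)) (at x)"
    and lip: "\<And>x y. norm (G x - G y) \<le> L * norm (x - y)"
    and L: "L > 0"
  shows "norm (G x - G y) ^ 2 \<le> L * ((G x - G y) \<bullet> (x - y))"
proof -
  have "F x + G x \<bullet> (y - x) + norm (G x - G y) ^ 2 / (2 * L) \<le> F y"
    using convex_smooth_gradient_gap[OF convex deriv lip L, of x y] by (simp add: norm_minus_commute)
  moreover have "F y + G y \<bullet> (x - y) + norm (G x - G y) ^ 2 / (2 * L) \<le> F x"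
    by (rule convex_smooth_gradient_gap[OF convex deriv lip L])
  ultimately have "norm (G x - G y) ^ 2 / L \<le> (G x - G y) \<bullet> (x - y)"
    by (simp add: algebra_simps inner_diff_left inner_diff_right)
  then show ?thesis
    using L by (simp add: divide_le_eq mult.commute)
qed

lemma norm_step_le_of_cocoercive:
  fixes u d :: "'a::real_inner"
  assumes cocoercive: "norm d ^ 2 \<le> L * (d \<bullet> u)" and bounded: "norm d \<le> L * norm u"
    and L: "L > 0" and r: "r \<ge> 0"
  shows "norm (u - r *\<^sub>R d) \<le> max 1 (L * r - 1) * norm u"
proof -
  have "(u - r *\<^sub>R d) \<bullet> (u - r *\<^sub>R d) = u \<bullet> u - 2 * r * (d \<bullet> u) + r\<^sup>2 * (d \<bullet> d)"
    by (simp add: inner_diff_left inner_diff_right inner_commute algebra_simps power2_eq_square)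
  then have expand: "norm (u - r *\<^sub>R d) ^ 2 = norm u ^ 2 - 2 * r * (d \<bullet> u) + r\<^sup>2 * norm d ^ 2"
    by (simp add: power2_norm_eq_inner)
  have "0 \<le> L * (d \<bullet> u)"
    using cocoercive by (meson order_trans zero_le_power2)
  with L have du: "0 \<le> d \<bullet> u"
    by (simp add: zero_le_mult_iff)
  have "norm (u - r *\<^sub>R d) ^ 2 \<le> (max 1 (L * r - 1) * norm u) ^ 2"
  proof (cases "L * r \<le> 2")
    case True
    have "r\<^sup>2 * norm d ^ 2 \<le> r\<^sup>2 * (L * (d \<bullet> u))"
      using cocoercive by (intro mult_left_mono) auto
    also have "\<dots> = r * (L * r) * (d \<bullet> u)"
      by (simp add: power2_eq_square)
    also have "\<dots> \<le> r * 2 * (d \<bullet> u)"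
      using True r du by (intro mult_right_mono mult_left_mono) auto
    finally have "norm (u - r *\<^sub>R d) ^ 2 \<le> norm u ^ 2"
      using expand by linarith
    also have "\<dots> \<le> (max 1 (L * r - 1) * norm u) ^ 2"
      using mult_right_mono[of 1 "max 1 (L * r - 1)" "norm u"] by (intro power_mono) auto
    finally show ?thesis .
  next
    case False
    have excess: "r\<^sup>2 - 2 * r / L \<ge> 0"
      using False L r mult_left_mono[of 2 "L * r" r] by (simp add: field_simps power2_eq_square)
    have "2 * r * (norm d ^ 2 / L) \<le> 2 * r * (d \<bullet> u)"
      using cocoercive L r by (intro mult_left_mono) (auto simp: divide_le_eq mult.commute)
    then have "norm (u - r *\<^sub>R d) ^ 2 \<le> norm u ^ 2 + (r\<^sup>2 - 2 * r / L) * norm d ^ 2"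
      using expand by (simp add: algebra_simps)
    also have "\<dots> \<le> norm u ^ 2 + (r\<^sup>2 - 2 * r / L) * (L * norm u) ^ 2"
      using bounded excess by (intro add_left_mono mult_left_mono power_mono) auto
    also have "\<dots> = ((L * r - 1) * norm u) ^ 2"
      using L by (simp add: field_simps power2_eq_square)
    also have "\<dots> \<le> (max 1 (L * r - 1) * norm u) ^ 2"
      using False by simp
    finally show ?thesis .
  qed
  then show ?thesis
    by (rule power2_le_imp_le) auto
qed

lemma gstep_lipschitz:
  fixes F :: "'a::real_inner \<Rightarrow> real"
  assumes convex: "convex_on UNIV F"
    and deriv: "\<And>x. (F has_derivative (\<lambda>h. G x \<bullet> h)) (at x)"
    and lip: "\<And>x y. norm (G x - G y) \<le> L * norm (x - y)"
    and L: "L \<ge> 0" and r: "r \<ge> 0"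
  shows "norm (gstep G a r - gstep G b r) \<le> Dfac L r * norm (a - b)"
proof (cases "L = 0")
  case True
  then have "G a = G b"
    using lip[of a b] by simp
  then show ?thesis
    using True by (simp add: gstep_def Dfac_def)
next
  case False
  with L have "L > 0" by simp
  have "norm ((a - b) - r *\<^sub>R (G a - G b)) \<le> max 1 (L * r - 1) * norm (a - b)"
    by (rule norm_step_le_of_cocoercive
          [OF convex_smooth_gradient_cocoercive[OF convex deriv lip \<open>L > 0\<close>] lip \<open>L > 0\<close> r])
  then show ?thesis
    by (simp add: gstep_def Dfac_def algebra_simps)
qed

lemma gradient_zero_at_minimum:
  fixes F :: "'a::real_inner \<Rightarrow> real"
  assumes deriv: "(F has_derivative (\<lambda>h. G x \<bullet> h)) (at x)"
    and min: "\<And>y. F x \<le> F y"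
  shows "G x = 0"
proof -
  have "(\<lambda>h. G x \<bullet> h) = (\<lambda>h. 0)"
    using differential_zero_maxmin[of x UNIV F] deriv min by auto
  then have "G x \<bullet> G x = 0"
    by meson
  then show ?thesis
    by simp
qed

lemma lipschitz_constant_nonneg:
  fixes G :: "'a::{real_normed_vector, perfect_space} \<Rightarrow> 'b::real_normed_vector"
  assumes "\<And>x y. norm (G x - G y) \<le> L * norm (x - y)"
  shows "L \<ge> 0"
proof -
  obtain a :: 'a where "norm a = 1"
    using vector_choose_size zero_le_one by blast
  then show ?thesis
    using assms[of a 0] by (simp add: order_trans[OF norm_ge_zero])
qed

lemma giter_0 [simp]: "giter G 0 z r = z"
  by (simp add: giter_def)

lemma giter_Suc: "giter G (Suc i) z r = gstep G (giter G i z r) r"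
  by (simp add: giter_def)

lemma norm_giter_le_geometric:
  assumes progress: "\<And>x. norm x \<le> Z \<Longrightarrow> norm (gstep G x r) \<le> q * norm x"
    and q: "0 \<le> q" "q \<le> 1"
    and z: "norm z \<le> Z"
  shows "norm (giter G i z r) \<le> q ^ i * Z"
proof (induction i)
  case 0
  then show ?case using z by simp
next
  case (Suc i)
  have "q ^ i * Z \<le> Z"
    using q z norm_ge_zero[of z] by (intro mult_left_le_one_le power_le_one) (auto simp del: norm_ge_zero)
  with Suc have "norm (gstep G (giter G i z r) r) \<le> q * norm (giter G i z r)"
    by (intro progress) simp
  also have "\<dots> \<le> q * (q ^ i * Z)"
    using Suc q by (intro mult_left_mono) auto
  finally show ?case
    by (simp add: giter_Suc)
qed

lemma norm_gstep_diff_params: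
  "norm (gstep G x \<rho> - gstep G y \<eta>) \<le> norm (gstep G x \<rho> - gstep G y \<rho>) + \<bar>\<eta> - \<rho>\<bar> * norm (G y)"
proof -
  have "gstep G x \<rho> - gstep G y \<eta> = (gstep G x \<rho> - gstep G y \<rho>) + (\<eta> - \<rho>) *\<^sub>R G y"
    by (simp add: gstep_def algebra_simps)
  then show ?thesis
    by (metis norm_scaleR norm_triangle_ineq)
qed

lemma norm_giter_Suc_diff_params_le:
  fixes F :: "'a::real_inner \<Rightarrow> real"
  assumes convex: "convex_on UNIV F"
    and deriv: "\<And>x. (F has_derivative (\<lambda>h. G x \<bullet> h)) (at x)"
    and lip: "\<And>x y. norm (G x - G y) \<le> L * norm (x - y)"
    and L: "L \<ge> 0" and \<rho>: "0 \<le> \<rho>" "\<rho> \<le> \<eta>"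
  shows "norm (giter G (Suc i) z \<rho> - giter G (Suc i) z \<eta>)
    \<le> Dfac L \<rho> * norm (giter G i z \<rho> - giter G i z \<eta>) + (\<eta> - \<rho>) * norm (G (giter G i z \<eta>))"
proof -
  let ?x = "giter G i z \<rho>" and ?y = "giter G i z \<eta>"
  have "norm (giter G (Suc i) z \<rho> - giter G (Suc i) z \<eta>)
      \<le> norm (gstep G ?x \<rho> - gstep G ?y \<rho>) + \<bar>\<eta> - \<rho>\<bar> * norm (G ?y)"
    unfolding giter_Suc by (rule norm_gstep_diff_params)
  also have "\<dots> \<le> Dfac L \<rho> * norm (?x - ?y) + (\<eta> - \<rho>) * norm (G ?y)"
    using gstep_lipschitz[OF convex deriv lip L \<rho>(1)] \<rho> by simp
  finally show ?thesis .
qed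

text \<open>The strengthened invariant \<open>e i \<le> K D\<^sup>i (1 - q\<^sup>i) / (1 - q)\<close> is what the induction carries.\<close>
lemma perturbed_recurrence_bound:
  fixes e :: "nat \<Rightarrow> real"
  assumes e0: "e 0 \<le> 0" and step: "\<And>i. e (Suc i) \<le> D * e i + K * q ^ i"
    and D: "D \<ge> 1" and K: "K \<ge> 0" and q: "0 \<le> q" "q < 1"
  shows "e i \<le> K * D ^ i / (1 - q)"
proof -
  have "e i \<le> K * D ^ i * (1 - q ^ i) / (1 - q)" for i
  proof (induction i)
    case 0
    then show ?case using e0 by simp
  next
    case (Suc i)
    have "K * q ^ i \<le> K * D ^ Suc i * q ^ i"
      using K q mult_right_mono[OF one_le_power[OF D, of "Suc i"], of "q ^ i"]
      by (simp add: mult_left_mono mult.assoc)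
    also have "\<dots> = K * D ^ Suc i * ((1 - q) * q ^ i) / (1 - q)"
      using q by simp
    also have "\<dots> = K * D ^ Suc i * (q ^ i - q ^ Suc i) / (1 - q)"
      by (simp add: algebra_simps)
    finally have "D * e i + K * q ^ i
        \<le> K * D ^ Suc i * (1 - q ^ i) / (1 - q) + K * D ^ Suc i * (q ^ i - q ^ Suc i) / (1 - q)"
      using Suc D mult_left_mono[OF Suc, of D] by (simp add: mult_ac)
    also have "\<dots> = K * D ^ Suc i * (1 - q ^ Suc i) / (1 - q)"
      by (simp add: add_divide_distrib[symmetric] algebra_simps)
    finally show ?case
      using step[of i] by linarith
  qed
  moreover have "K * D ^ i * (1 - q ^ i) / (1 - q) \<le> K * D ^ i / (1 - q)"
    using K D q by (intro divide_right_mono mult_right_le_one_le) (auto simp: power_le_one)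
  ultimately show ?thesis
    by (rule order_trans)
qed

theorem mainTheorem8:
  fixes f :: "'a::euclidean_space \<Rightarrow> real"
    and gradf :: "'a \<Rightarrow> 'a"
    and L Z c \<rho>l \<rho>u \<rho> \<eta> :: real
    and z :: 'a and j :: nat
  assumes convex: "convex_on UNIV f"
    and grad: "\<And>x. (f has_derivative (\<lambda>h. gradf x \<bullet> h)) (at x)"
    and smooth: "\<And>x y. norm (gradf x - gradf y) \<le> L * norm (x - y)"
    and min0: "f 0 = 0"
    and uniqmin: "\<And>x. x \<noteq> 0 \<Longrightarrow> f x > 0"
    and Zpos: "Z > 0"
    and rho_int: "0 < \<rho>l" "\<rho>l \<le> \<rho>u"
    and cbounds: "0 < c" "c < 1"
    and progress: "\<And>r x. \<rho>l \<le> r \<Longrightarrow> r \<le> \<rho>u \<Longrightarrow> norm x \<le> Z \<Longrightarrow>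
                      norm (x - r *\<^sub>R gradf x) \<le> (1 - c) * norm x"
    and znorm: "norm z \<le> Z"
    and rho_in: "\<rho>l \<le> \<rho>" "\<rho> \<le> \<eta>" "\<eta> \<le> \<rho>u"
  shows "norm (giter gradf j z \<rho> - giter gradf j z \<eta>) \<le> (\<eta> - \<rho>) * (Dfac L \<rho> ^ j * L * Z / c)"
proof -
  have L: "L \<ge> 0"
    by (rule lipschitz_constant_nonneg[OF smooth])
  have "gradf 0 = 0"
    using min0 uniqmin by (intro gradient_zero_at_minimum[OF grad]) (metis order.refl less_imp_le)
  then have grad_bound: "norm (gradf y) \<le> L * norm y" for y
    using smooth[of y 0] by simp
  have orbit_\<eta>: "norm (giter gradf i z \<eta>) \<le> (1 - c) ^ i * Z" for i
    using progress[of \<eta>] rho_in rho_int cbounds znorm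
    by (intro norm_giter_le_geometric) (auto simp: gstep_def)
  have error_step: "norm (giter gradf (Suc i) z \<rho> - giter gradf (Suc i) z \<eta>)
      \<le> Dfac L \<rho> * norm (giter gradf i z \<rho> - giter gradf i z \<eta>) + (\<eta> - \<rho>) * L * Z * (1 - c) ^ i" for i
  proof -
    have "(\<eta> - \<rho>) * norm (gradf (giter gradf i z \<eta>)) \<le> (\<eta> - \<rho>) * (L * ((1 - c) ^ i * Z))"
      using rho_in order_trans[OF grad_bound mult_left_mono[OF orbit_\<eta> L]] by (simp add: mult_left_mono)
    then show ?thesis
      using norm_giter_Suc_diff_params_le[OF convex grad smooth L, of \<rho> \<eta> i z] rho_in rho_int
      by (simp add: mult_ac)
  qed
  have "norm (giter gradf j z \<rho> - giter gradf j z \<eta>) \<le> (\<eta> - \<rho>) * L * Z * Dfac L \<rho> ^ j / (1 - (1 - c))"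
    using error_step rho_in L Zpos cbounds
    by (intro perturbed_recurrence_bound) (auto simp: Dfac_def)
  then show ?thesis
    by (simp add: mult_ac)
qed

end
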